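(* Under the setting, assumptions (A1)–(A2) and the algorithm PDAc-L described in the context, fix any $(x^\star,y^\star)\in\Omega$ and let $J(x,y)=\mathcal L(x,y^\star)-\mathcal L(x^\star,y)$. Then for every $n\ge1$, $$\tau_nJ(x_n,y_n)\le\langle x_{n+1}-z_{n+1},x^\star-x_{n+1}\rangle+\frac1\beta\langle y_n-y_{n-1},y^\star-y_n\rangle+\psi\delta_n\langle x_n-z_{n+1},x_{n+1}-x_n\rangle+\tau_n\langle\theta_n,x_n-x_{n+1}\rangle+\tau_n\Phi_n^y.$$
   Context: Let $f:\mathbb{R}^p\to(-\infty,+\infty]$ and $g:\mathbb{R}^q\to(-\infty,+\infty]$ be proper closed convex functions; $f^*(y)=\sup_u\{\langle y,u\rangle-f(u)\}$ is the Fenchel conjugate, $\mathrm{dom}(h)=\{x:h(x)<+\infty\}$, and for $\lambda>0$, $\mathrm{Prox}_{\lambda h}(x)=\arg\min_u\{h(u)+\frac{1}{2\lambda}\|u-x\|^2\}$. Let $\Phi:\mathrm{dom}(g)\times\mathrm{dom}(f^* )\to\mathbb{R}$ be continuous and $\mathcal L(x,y)=g(x)+\Phi(x,y)-f^*(y)$. Let $\Omega$ be the set of $(x^\star,y^\star)\in\mathrm{dom}(g)\times\mathrm{dom}(f^* )$ with $-\nabla_x\Phi(x^\star,y^\star)\in\partial g(x^\star)$ and $\nabla_y\Phi(x^\star,y^\star)\in\partial f^*(y^\star)$. Assume: (A1) $\Omega\neq\emptyset$, $\mathrm{dom}(g)\times\mathrm{dom}(f^* )\subseteq\mathrm{dom}(\Phi)$,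 and $\mathcal L(x^\star,y^\star)$ is finite; (A2) for each $y\in\mathrm{dom}(f^* )$, $\Phi(\cdot,y)$ is convex and differentiable, for each $x\in\mathrm{dom}(g)$, $\Phi(x,\cdot)$ is concave and differentiable, and for all bounded $\mathcal X\subset\mathbb R^q$, $\mathcal Y\subset\mathbb R^p$ there exist $L_{yy},L_{xx}\ge 0$, $L_{xy}>0$ with $\|\nabla_y\Phi(x,y)-\nabla_y\Phi(x,\tilde y)\|\le L_{yy}\|y-\tilde y\|$ and $\|\nabla_x\Phi(x,y)-\nabla_x\Phi(\tilde x,\tilde y)\|\le L_{xx}\|x-\tilde x\|+L_{xy}\|y-\tilde y\|$ for all $x,\tilde x\in\mathcal X\cap\mathrm{dom}(g)$, $y,\tilde y\in\mathcal Y\cap\mathrm{dom}(f^* )$. Algorithm PDAc-L: choose $\psi\in(1,1+\sqrt3)$, $\xi>0$, $\varphi>1$ with $\omega:=2\psi-\xi-\frac{\psi^3\varphi}{1+\psi}>0$, $\tau_{\max}>0$, $\nu\in(0,1)$, $\mu\in(0,1)$, $\eta\in[0,1)$, an integer $M\ge1$, $\beta>0$, $x_0\in\mathrm{dom}(g)$, $y_0\in\mathrm{dom}(f^* )$, $\tau_0\in(0,\tau_{\max}]$; set $z_0=x_0$, $\delta_0=1$. For $n=1,2,\dots$: (1) $z_n=\frac{\psi-1}{\psi}x_{n-1}+\frac1\psi z_{n-1}$ and $x_n=\mathrm{Prox}_{\tau_{n-1}g}(z_n-\tau_{n-1}\nabla_x\Phi(x_{n-1},y_{n-1}))$. (2)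 Let $\tau=\min\{\varphi\tau_{n-1},\tau_{\max}\}$; set $\tau_n=\tau\mu^i$ and $y_n=\mathrm{Prox}_{\beta\tau_n f^*}(y_{n-1}+\beta\tau_n\nabla_y\Phi(x_n,y_{n-1}))$, where $i$ is the smallest nonnegative integer such that $\frac{\tau_n\tau_{n-1}}{\xi}\|\theta_n\|^2+2\tau_n\Phi_n^y\le\nu r_n+(1-\nu)c_n$, with $\theta_n=\nabla_x\Phi(x_n,y_n)-\nabla_x\Phi(x_{n-1},y_{n-1})$, $\Phi_n^y=\Phi(x_n,y_{n-1})+\langle\nabla_y\Phi(x_n,y_{n-1}),y_n-y_{n-1}\rangle-\Phi(x_n,y_n)$, $r_n=\omega\delta_{n-1}\|x_n-x_{n-1}\|^2+\frac1\beta\|y_n-y_{n-1}\|^2$, $c_n=\frac{\eta}{|\mathcal I_n|}\sum_{i\in\mathcal I_n}r_i$, $\mathcal I_n=\{n-1,n-2,\dots,\max\{n-M,1\}\}$ (the $r_i$ for $i<n$ being the values from earlier iterations; for $n=1$, $\mathcal I_1=\emptyset$ and $c_1:=0$). (3) $\delta_n=\tau_n/\tau_{n-1}$. *)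

theory Defs
  imports "HOL-Analysis.Analysis"
begin

definition edom :: "('a \<Rightarrow> ereal) \<Rightarrow> 'a set" where
  "edom h = {x. h x < \<infinity>}"

definition proper_fun :: "('a \<Rightarrow> ereal) \<Rightarrow> bool" where
  "proper_fun h \<longleftrightarrow> (\<forall>x. h x \<noteq> -\<infinity>) \<and> (\<exists>x. h x < \<infinity>)"

definition convex_fun :: "('a::real_vector \<Rightarrow> ereal) \<Rightarrow> bool" where
  "convex_fun h \<longleftrightarrow> convex {(x, t::real). h x \<le> ereal t}"

definition closed_fun :: "('a::topological_space \<Rightarrow> ereal) \<Rightarrow> bool" where
  "closed_fun h \<longleftrightarrow> closed {(x, t::real). h x \<le> ereal t}"

definition fconj :: "('a::real_inner \<Rightarrow> ereal) \<Rightarrow> 'a \<Rightarrow> ereal" where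
  "fconj f y = (SUP u. ereal (y \<bullet> u) - f u)"

definition subdiff :: "('a::real_inner \<Rightarrow> ereal) \<Rightarrow> 'a \<Rightarrow> 'a set" where
  "subdiff h x = {v. h x < \<infinity> \<and> (\<forall>u. h x + ereal (v \<bullet> (u - x)) \<le> h u)}"

definition Prox :: "real \<Rightarrow> ('a::real_normed_vector \<Rightarrow> ereal) \<Rightarrow> 'a \<Rightarrow> 'a set" where
  "Prox lam h x = {u. \<forall>v. h u + ereal (norm (u - x)^2 / (2 * lam))
                         \<le> h v + ereal (norm (v - x)^2 / (2 * lam))}"

definition Lag :: "('a \<Rightarrow> ereal) \<Rightarrow> ('a \<Rightarrow> 'b \<Rightarrow> real) \<Rightarrow> ('b \<Rightarrow> ereal) \<Rightarrow> 'a \<Rightarrow> 'b \<Rightarrow> ereal" where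
  "Lag g Phi fs x y = g x + ereal (Phi x y) - fs y"

definition rval :: "real \<Rightarrow> real \<Rightarrow> real \<Rightarrow> 'a::real_normed_vector \<Rightarrow> 'a \<Rightarrow> 'b::real_normed_vector \<Rightarrow> 'b \<Rightarrow> real" where
  "rval \<omega> \<beta> d xn xp yn yp = \<omega> * d * norm (xn - xp)^2 + 1 / \<beta> * norm (yn - yp)^2"

text \<open>I_n = {max(n-M,1), ..., n-1}; for n = 1 this is empty and c_1 = 0.\<close>
definition ls_ok :: "('a::real_inner \<Rightarrow> 'b::real_inner \<Rightarrow> real) \<Rightarrow> ('a \<Rightarrow> 'b \<Rightarrow> 'a) \<Rightarrow> ('a \<Rightarrow> 'b \<Rightarrow> 'b)
   \<Rightarrow> real \<Rightarrow> real \<Rightarrow> real \<Rightarrow> real \<Rightarrow> real \<Rightarrow> nat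
   \<Rightarrow> (nat \<Rightarrow> 'a) \<Rightarrow> (nat \<Rightarrow> 'b) \<Rightarrow> (nat \<Rightarrow> real) \<Rightarrow> (nat \<Rightarrow> real) \<Rightarrow> nat \<Rightarrow> real \<Rightarrow> 'b \<Rightarrow> bool" where
  "ls_ok Phi Gx Gy \<xi> \<omega> \<beta> \<nu> \<eta> M x y \<tau> \<delta> n t y' \<longleftrightarrow>
     (let \<theta> = Gx (x n) y' - Gx (x (n - 1)) (y (n - 1));
          Py = Phi (x n) (y (n - 1)) + Gy (x n) (y (n - 1)) \<bullet> (y' - y (n - 1)) - Phi (x n) y';
          r = rval \<omega> \<beta> (\<delta> (n - 1)) (x n) (x (n - 1)) y' (y (n - 1));
          I = {max (n - M) 1 ..< n};
          c = \<eta> / real (card I) *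
              (\<Sum>i\<in>I. rval \<omega> \<beta> (\<delta> (i - 1)) (x i) (x (i - 1)) (y i) (y (i - 1)))
      in t * \<tau> (n - 1) / \<xi> * norm \<theta>^2 + 2 * t * Py \<le> \<nu> * r + (1 - \<nu>) * c)"

end

theory Submission
  imports Defs
begin

text \<open>The estimate is the sum of the first-order optimality conditions of three proximal
  steps -- those producing \<open>x\<^sub>n\<^sub>+\<^sub>1\<close>, \<open>x\<^sub>n\<close> and \<open>y\<^sub>n\<close>, the second one weighted by
  \<open>\<delta>\<^sub>n\<close> so that \<open>\<delta>\<^sub>n \<tau>\<^sub>n\<^sub>-\<^sub>1 = \<tau>\<^sub>n\<close> -- and of the gradient inequalities for the convex
  function \<open>\<Phi>(\<cdot>, y\<^sub>n)\<close> and the concave function \<open>\<Phi>(x\<^sub>n, \<cdot>)\<close>.\<close>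

lemma convex_fun_iff:
  "convex_fun h \<longleftrightarrow>
     (\<forall>u v a b t. h u \<le> ereal a \<longrightarrow> h v \<le> ereal b \<longrightarrow> 0 \<le> t \<longrightarrow> t \<le> 1 \<longrightarrow>
        h ((1 - t) *\<^sub>R u + t *\<^sub>R v) \<le> ereal ((1 - t) * a + t * b))"
  unfolding convex_fun_def convex_alt by (auto simp: algebra_simps)

lemma convex_fun_fconj: "convex_fun (fconj f)"
  unfolding convex_fun_iff
proof (intro allI impI)
  fix u v a b and t :: real
  assume ua: "fconj f u \<le> ereal a" and vb: "fconj f v \<le> ereal b" and t: "0 \<le> t" "t \<le> 1"
  show "fconj f ((1 - t) *\<^sub>R u + t *\<^sub>R v) \<le> ereal ((1 - t) * a + t * b)"
    unfolding fconj_def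
  proof (rule SUP_least)
    fix w
    have u: "ereal (u \<bullet> w) - f w \<le> ereal a" and v: "ereal (v \<bullet> w) - f w \<le> ereal b"
      using ua vb unfolding fconj_def by (meson SUP_upper UNIV_I order_trans)+
    show "ereal (((1 - t) *\<^sub>R u + t *\<^sub>R v) \<bullet> w) - f w \<le> ereal ((1 - t) * a + t * b)"
    proof (cases "f w")
      case (real r)
      have "((1 - t) *\<^sub>R u + t *\<^sub>R v) \<bullet> w - r = (1 - t) * (u \<bullet> w - r) + t * (v \<bullet> w - r)"
        by (simp add: inner_add_left algebra_simps)
      also have "\<dots> \<le> (1 - t) * a + t * b"
        using u v t real by (intro add_mono mult_left_mono) auto
      finally show ?thesis using real by simp
    qed (use u in auto)
  qed
qed

lemma fconj_neq_minf:
  assumes "proper_fun f" shows "fconj f y \<noteq> -\<infinity>"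
proof -
  obtain w r where "f w = ereal r"
    using assms unfolding proper_fun_def by (metis less_ereal.simps(2) ereal_cases)
  moreover have "ereal (y \<bullet> w) - f w \<le> fconj f y" unfolding fconj_def by (rule SUP_upper) auto
  ultimately show ?thesis by auto
qed

lemma edom_ereal_real:
  assumes "u \<in> edom h" "h u \<noteq> -\<infinity>" shows "h u = ereal (real_of_ereal (h u))"
  using assms unfolding edom_def by (cases "h u") auto

lemma Prox_in_edom:
  assumes "u \<in> Prox lam h w" "v \<in> edom h" shows "u \<in> edom h"
proof -
  have "h u + ereal (norm (u - w)^2 / (2 * lam)) \<le> h v + ereal (norm (v - w)^2 / (2 * lam))"
    using assms(1) unfolding Prox_def by blast
  also have "\<dots> < \<infinity>" using assms(2) unfolding edom_def by simp
  finally show ?thesis unfolding edom_def by auto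
qed

lemma le_of_forall_le_add_mult:
  fixes a b C :: real
  assumes "\<And>t. 0 < t \<Longrightarrow> t < 1 \<Longrightarrow> a \<le> b + t * C"
  shows "a \<le> b"
proof -
  have "((\<lambda>t. b + t * C) \<longlongrightarrow> b) (at_right 0)"
    by (auto intro!: tendsto_eq_intros)
  moreover have "eventually (\<lambda>t. a \<le> b + t * C) (at_right 0)"
    using eventually_at_right_real[of 0 1] by (rule eventually_mono) (use assms in auto)
  ultimately show ?thesis by (rule tendsto_lowerbound) simp
qed

lemma Prox_variational_inequality:
  fixes h :: "'a::real_inner \<Rightarrow> ereal"
  assumes P: "u \<in> Prox lam h w" and lam: "lam > 0" and cvx: "convex_fun h"
    and ua: "h u = ereal a" and vb: "h v = ereal b"
  shows "(w - u) \<bullet> (v - u) \<le> lam * (b - a)"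
proof -
  define d where "d = v - u"
  define C where "C = (norm d)^2 / (2 * lam)"
  have bound: "a \<le> b + (u - w) \<bullet> d / lam + t * C" if t: "0 < t" "t < 1" for t
  proof -
    have "u + t *\<^sub>R d = (1 - t) *\<^sub>R u + t *\<^sub>R v" by (simp add: d_def algebra_simps)
    then have "h (u + t *\<^sub>R d) \<le> ereal ((1 - t) * a + t * b)"
      using cvx ua vb t unfolding convex_fun_iff by simp
    then have cvx_step: "h (u + t *\<^sub>R d) + ereal (norm (u + t *\<^sub>R d - w)^2 / (2 * lam))
        \<le> ereal ((1 - t) * a + t * b) + ereal (norm (u + t *\<^sub>R d - w)^2 / (2 * lam))"
      by (rule add_right_mono)
    have "h u + ereal (norm (u - w)^2 / (2 * lam))
        \<le> h (u + t *\<^sub>R d) + ereal (norm (u + t *\<^sub>R d - w)^2 / (2 * lam))"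
      using P unfolding Prox_def by blast
    also note cvx_step
    finally have "a + norm (u - w)^2 / (2 * lam) \<le> (1 - t) * a + t * b + norm (u + t *\<^sub>R d - w)^2 / (2 * lam)"
      using ua by simp
    moreover have "norm (u + t *\<^sub>R d - w)^2 = norm (u - w)^2 + (2 * t * ((u - w) \<bullet> d) + t^2 * norm d ^ 2)"
    proof -
      have "u + t *\<^sub>R d - w = (u - w) + t *\<^sub>R d" by simp
      then show ?thesis unfolding power2_norm_eq_inner
        by (simp add: inner_add_left inner_add_right inner_commute algebra_simps power2_eq_square)
    qed
    ultimately have "a + norm (u - w)^2 / (2 * lam) \<le> (1 - t) * a + t * b
        + (norm (u - w)^2 / (2 * lam) + (2 * t * ((u - w) \<bullet> d) + t^2 * norm d ^ 2) / (2 * lam))"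
      by (simp only: add_divide_distrib[of "norm (u - w)^2"])
    then have "t * a \<le> t * b + (2 * t * ((u - w) \<bullet> d) + t^2 * norm d ^ 2) / (2 * lam)"
      by (simp add: algebra_simps)
    also have "(2 * t * ((u - w) \<bullet> d) + t^2 * norm d ^ 2) / (2 * lam) = t * ((u - w) \<bullet> d / lam + t * C)"
      using lam by (simp add: C_def field_simps power2_eq_square)
    finally have "t * a \<le> t * (b + (u - w) \<bullet> d / lam + t * C)"
      by (simp add: algebra_simps)
    then show ?thesis using t by simp
  qed
  then have "a \<le> b + (u - w) \<bullet> d / lam"
    by (rule le_of_forall_le_add_mult)
  then have "lam * a \<le> lam * b + (u - w) \<bullet> d"
    using lam by (simp add: field_simps)
  moreover have "(w - u) \<bullet> (v - u) = - ((u - w) \<bullet> d)"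
    by (metis d_def inner_minus_left minus_diff_eq)
  ultimately show ?thesis by (simp add: right_diff_distrib)
qed

lemma convex_on_above_tangent_within:
  fixes F :: "'a::real_normed_vector \<Rightarrow> real"
  assumes cvx: "convex_on S F" and a: "a \<in> S" and b: "b \<in> S"
    and F': "(F has_derivative F') (at a within S)"
  shows "F a + F' (b - a) \<le> F b"
proof -
  define p where "p t = a + t *\<^sub>R (b - a)" for t :: real
  have p_convex: "p t = (1 - t) *\<^sub>R a + t *\<^sub>R b" for t by (simp add: p_def algebra_simps)
  have "p ` {0..1} \<subseteq> S"
    using cvx a b unfolding convex_on_def p_convex by (auto intro: convexD)
  then have "(F has_derivative F') (at (p 0) within p ` {0..1})"
    using F' by (simp add: p_def has_derivative_subset)
  moreover have "(p has_derivative (\<lambda>t. t *\<^sub>R (b - a))) (at 0 within {0..1})"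
    unfolding p_def by (auto intro!: derivative_eq_intros)
  ultimately have "((F \<circ> p) has_derivative (\<lambda>t. F' (t *\<^sub>R (b - a)))) (at 0 within {0..1})"
    using diff_chain_within by (fastforce simp: comp_def)
  moreover have "(\<lambda>t. F' (t *\<^sub>R (b - a))) = (*) (F' (b - a))"
    using linear_cmul[OF has_derivative_linear[OF F']] by (simp add: fun_eq_iff mult.commute)
  ultimately have "((F \<circ> p) has_field_derivative F' (b - a)) (at 0 within {0..1})"
    by (simp add: has_field_derivative_def)
  then have "((\<lambda>t. (F (p t) - F (p 0)) / (t - 0)) \<longlongrightarrow> F' (b - a)) (at 0 within {0..1})"
    unfolding has_field_derivative_iff by simp
  moreover have "eventually (\<lambda>t. (F (p t) - F (p 0)) / (t - 0) \<le> F b - F a) (at 0 within {0..1})"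
    unfolding eventually_at_filter
  proof (intro always_eventually allI impI)
    fix t :: real assume t: "t \<noteq> 0" "t \<in> {0..1}"
    then have "F (p t) \<le> (1 - t) * F a + t * F b"
      unfolding p_convex using convex_onD[OF cvx] a b by auto
    then have "F (p t) - F (p 0) \<le> t * (F b - F a)"
      by (simp add: p_def algebra_simps)
    then show "(F (p t) - F (p 0)) / (t - 0) \<le> F b - F a"
      using t by (simp add: divide_le_eq mult.commute)
  qed
  moreover have "\<not> trivial_limit (at (0::real) within {0..1})"
    by (simp add: trivial_limit_within islimpt_Icc)
  ultimately have "F' (b - a) \<le> F b - F a" by (rule tendsto_upperbound)
  then show ?thesis by simp
qed

lemma concave_on_below_tangent_within:
  fixes F :: "'a::real_normed_vector \<Rightarrow> real"
  assumes "concave_on S F" and "a \<in> S" and "b \<in> S"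
    and "(F has_derivative F') (at a within S)"
  shows "F b \<le> F a + F' (b - a)"
  using convex_on_above_tangent_within[of S "\<lambda>u. - F u" a b "\<lambda>h. - F' h"] assms
  by (simp add: concave_on_def has_derivative_minus)

lemma backtracking_steps_pos:
  fixes \<tau> :: "nat \<Rightarrow> real"
  assumes "\<tau> 0 > 0" "\<phi> > 0" "\<tau>max > 0" "\<mu> > 0"
    and "\<And>k. k \<ge> 1 \<Longrightarrow> \<exists>i::nat. \<tau> k = min (\<phi> * \<tau> (k - 1)) \<tau>max * \<mu> ^ i"
  shows "\<tau> k > 0"
proof (induction k)
  case (Suc k)
  then obtain i where "\<tau> (Suc k) = min (\<phi> * \<tau> k) \<tau>max * \<mu> ^ i"
    using assms(5)[of "Suc k"] by auto
  then show ?case using Suc assms(2-4) by simp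
qed (use assms(1) in simp)

locale pdac_iteration =
  fixes g :: "'a::real_inner \<Rightarrow> ereal" and f :: "'b::real_inner \<Rightarrow> ereal"
    and Phi :: "'a \<Rightarrow> 'b \<Rightarrow> real" and Gx :: "'a \<Rightarrow> 'b \<Rightarrow> 'a" and Gy :: "'a \<Rightarrow> 'b \<Rightarrow> 'b"
    and \<psi> \<beta> :: real and x z :: "nat \<Rightarrow> 'a" and y :: "nat \<Rightarrow> 'b" and \<tau> \<delta> :: "nat \<Rightarrow> real"
  assumes g_proper: "proper_fun g" and g_convex: "convex_fun g" and f_proper: "proper_fun f"
    and Phi_convex: "\<And>v. v \<in> edom (fconj f) \<Longrightarrow> convex_on (edom g) (\<lambda>u. Phi u v)"
    and Phi_dx: "\<And>u v. u \<in> edom g \<Longrightarrow> v \<in> edom (fconj f) \<Longrightarrow>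
                   ((\<lambda>u'. Phi u' v) has_derivative (\<lambda>h. Gx u v \<bullet> h)) (at u within edom g)"
    and Phi_concave: "\<And>u. u \<in> edom g \<Longrightarrow> concave_on (edom (fconj f)) (\<lambda>v. Phi u v)"
    and Phi_dy: "\<And>u v. u \<in> edom g \<Longrightarrow> v \<in> edom (fconj f) \<Longrightarrow>
                   ((\<lambda>v'. Phi u v') has_derivative (\<lambda>h. Gy u v \<bullet> h)) (at v within edom (fconj f))"
    and psi_nonzero: "\<psi> \<noteq> 0" and beta_pos: "\<beta> > 0" and tau_pos: "\<And>k. \<tau> k > 0"
    and y0_dom: "y 0 \<in> edom (fconj f)"
    and step_z: "\<And>k. k \<ge> 1 \<Longrightarrow> z k = ((\<psi> - 1) / \<psi>) *\<^sub>R x (k - 1) + (1 / \<psi>) *\<^sub>R z (k - 1)"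
    and step_x: "\<And>k. k \<ge> 1 \<Longrightarrow>
        x k \<in> Prox (\<tau> (k - 1)) g (z k - \<tau> (k - 1) *\<^sub>R Gx (x (k - 1)) (y (k - 1)))"
    and step_y: "\<And>k. k \<ge> 1 \<Longrightarrow>
        y k \<in> Prox (\<beta> * \<tau> k) (fconj f) (y (k - 1) + (\<beta> * \<tau> k) *\<^sub>R Gy (x k) (y (k - 1)))"
    and step_delta: "\<And>k. k \<ge> 1 \<Longrightarrow> \<delta> k = \<tau> k / \<tau> (k - 1)"
begin

lemma x_in_edom: "k \<ge> 1 \<Longrightarrow> x k \<in> edom g"
proof -
  assume "k \<ge> 1"
  obtain u where "u \<in> edom g" using g_proper unfolding proper_fun_def edom_def by blast
  then show "x k \<in> edom g" using Prox_in_edom[OF step_x[OF \<open>k \<ge> 1\<close>]] by blast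
qed

lemma y_in_edom: "y k \<in> edom (fconj f)"
  using y0_dom Prox_in_edom[OF step_y[of k] y0_dom] by (cases k) auto

lemma g_real: "u \<in> edom g \<Longrightarrow> g u = ereal (real_of_ereal (g u))"
  using g_proper unfolding proper_fun_def by (blast intro: edom_ereal_real)

lemma fconj_real: "w \<in> edom (fconj f) \<Longrightarrow> fconj f w = ereal (real_of_ereal (fconj f w))"
  using fconj_neq_minf[OF f_proper] by (blast intro: edom_ereal_real)

lemma Lag_real:
  assumes "u \<in> edom g" "w \<in> edom (fconj f)"
  shows "Lag g Phi (fconj f) u w
           = ereal (real_of_ereal (g u) + Phi u w - real_of_ereal (fconj f w))"
  unfolding Lag_def by (subst g_real[OF assms(1)], subst fconj_real[OF assms(2)]) simp

lemma z_extrapolation: "z k - x k = \<psi> *\<^sub>R (z (Suc k) - x k)"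
proof -
  have "\<psi> *\<^sub>R z (Suc k) = (\<psi> - 1) *\<^sub>R x k + z k"
    using step_z[of "Suc k"] psi_nonzero by (simp add: scaleR_add_right)
  then show ?thesis by (simp add: scaleR_diff_right scaleR_diff_left)
qed

lemma x_prox_inequality:
  assumes "k \<ge> 1" "v \<in> edom g"
  shows "(z k - x k) \<bullet> (v - x k) - \<tau> (k - 1) * (Gx (x (k - 1)) (y (k - 1)) \<bullet> (v - x k))
           \<le> \<tau> (k - 1) * (real_of_ereal (g v) - real_of_ereal (g (x k)))"
  using Prox_variational_inequality[OF step_x[OF assms(1)] tau_pos g_convex
      g_real[OF x_in_edom[OF assms(1)]] g_real[OF assms(2)]]
  by (simp add: inner_diff_left)

lemma y_prox_inequality:
  assumes "k \<ge> 1" "w \<in> edom (fconj f)"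
  shows "(y (k - 1) - y k) \<bullet> (w - y k) / \<beta> + \<tau> k * (Gy (x k) (y (k - 1)) \<bullet> (w - y k))
           \<le> \<tau> k * (real_of_ereal (fconj f w) - real_of_ereal (fconj f (y k)))"
proof -
  have "(y (k - 1) - y k) \<bullet> (w - y k) + \<beta> * (\<tau> k * (Gy (x k) (y (k - 1)) \<bullet> (w - y k)))
          \<le> \<beta> * (\<tau> k * (real_of_ereal (fconj f w) - real_of_ereal (fconj f (y k))))"
    using Prox_variational_inequality[OF step_y[OF assms(1)] _ convex_fun_fconj
        fconj_real[OF y_in_edom] fconj_real[OF assms(2)]] beta_pos tau_pos[of k]
    by (simp add: inner_add_left algebra_simps)
  then show ?thesis using beta_pos by (simp add: field_simps)
qed

lemma primal_estimate:
  assumes n: "n \<ge> 1" and v: "v \<in> edom g"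
  shows "\<tau> n * (real_of_ereal (g (x n)) - real_of_ereal (g v))
    \<le> (x (n + 1) - z (n + 1)) \<bullet> (v - x (n + 1))
      + \<psi> * \<delta> n * ((x n - z (n + 1)) \<bullet> (x (n + 1) - x n))
      + \<tau> n * ((Gx (x n) (y n) - Gx (x (n - 1)) (y (n - 1))) \<bullet> (x n - x (n + 1)))
      + \<tau> n * (Phi v (y n) - Phi (x n) (y n))"
proof -
  let ?A = "x (n + 1)" and ?Gn = "Gx (x n) (y n)" and ?Gp = "Gx (x (n - 1)) (y (n - 1))"
  have xn: "x n \<in> edom g" and xA: "?A \<in> edom g" using x_in_edom n by auto
  have step_new: "(z (n + 1) - ?A) \<bullet> (v - ?A) - \<tau> n * (?Gn \<bullet> (v - ?A))
      \<le> \<tau> n * (real_of_ereal (g v) - real_of_ereal (g ?A))"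
    using x_prox_inequality[of "n + 1" v] v by simp
  have extrapolation: "(z n - x n) \<bullet> (?A - x n) = - (\<psi> * ((x n - z (n + 1)) \<bullet> (?A - x n)))"
    by (simp add: z_extrapolation[of n] inner_diff_left algebra_simps)
  have "- (\<psi> * ((x n - z (n + 1)) \<bullet> (?A - x n))) - \<tau> (n - 1) * (?Gp \<bullet> (?A - x n))
      \<le> \<tau> (n - 1) * (real_of_ereal (g ?A) - real_of_ereal (g (x n)))"
    using x_prox_inequality[OF n xA] unfolding extrapolation .
  then have "\<delta> n * (- (\<psi> * ((x n - z (n + 1)) \<bullet> (?A - x n))) - \<tau> (n - 1) * (?Gp \<bullet> (?A - x n)))
      \<le> \<delta> n * (\<tau> (n - 1) * (real_of_ereal (g ?A) - real_of_ereal (g (x n))))"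
    using step_delta[OF n] tau_pos[of n] tau_pos[of "n - 1"] by (intro mult_left_mono) auto
  moreover have "\<tau> n = \<delta> n * \<tau> (n - 1)"
    using step_delta[OF n] tau_pos[of "n - 1"] by simp
  ultimately have step_old: "- (\<psi> * \<delta> n * ((x n - z (n + 1)) \<bullet> (?A - x n))) - \<tau> n * (?Gp \<bullet> (?A - x n))
      \<le> \<tau> n * (real_of_ereal (g ?A) - real_of_ereal (g (x n)))"
    by (simp add: algebra_simps)
  have "Phi (x n) (y n) + ?Gn \<bullet> (v - x n) \<le> Phi v (y n)"
    using convex_on_above_tangent_within[OF Phi_convex[OF y_in_edom] xn v Phi_dx[OF xn y_in_edom]] .
  then have tangent: "\<tau> n * (?Gn \<bullet> (v - x n)) \<le> \<tau> n * (Phi v (y n) - Phi (x n) (y n))"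
    using tau_pos[of n] by (simp add: mult_left_mono)
  show ?thesis
    using step_new step_old tangent by (simp add: inner_diff_left inner_diff_right algebra_simps)
qed

lemma dual_estimate:
  assumes n: "n \<ge> 1" and w: "w \<in> edom (fconj f)"
  shows "\<tau> n * (Phi (x n) w - real_of_ereal (fconj f w) + real_of_ereal (fconj f (y n)))
    \<le> 1 / \<beta> * ((y n - y (n - 1)) \<bullet> (w - y n))
      + \<tau> n * (Phi (x n) (y (n - 1)) + Gy (x n) (y (n - 1)) \<bullet> (y n - y (n - 1)))"
proof -
  have xn: "x n \<in> edom g" using x_in_edom n by auto
  have "Phi (x n) w \<le> Phi (x n) (y (n - 1)) + Gy (x n) (y (n - 1)) \<bullet> (w - y (n - 1))"
    using concave_on_below_tangent_within[OF Phi_concave[OF xn] y_in_edom w Phi_dy[OF xn y_in_edom]] .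
  then have "\<tau> n * Phi (x n) w
      \<le> \<tau> n * (Phi (x n) (y (n - 1)) + Gy (x n) (y (n - 1)) \<bullet> (w - y (n - 1)))"
    using tau_pos[of n] by (simp add: mult_left_mono)
  moreover have "(y (n - 1) - y n) \<bullet> (w - y n) / \<beta> = - (1 / \<beta> * ((y n - y (n - 1)) \<bullet> (w - y n)))"
    by (simp add: inner_diff_left diff_divide_distrib)
  moreover have "\<tau> n * (Gy (x n) (y (n - 1)) \<bullet> (w - y (n - 1)))
      = \<tau> n * (Gy (x n) (y (n - 1)) \<bullet> (w - y n)) + \<tau> n * (Gy (x n) (y (n - 1)) \<bullet> (y n - y (n - 1)))"
    by (simp add: inner_diff_right algebra_simps)
  ultimately show ?thesis
    using y_prox_inequality[OF n w] unfolding distrib_left right_diff_distrib by linarith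
qed

lemma gap_estimate:
  assumes "xs \<in> edom g" "ys \<in> edom (fconj f)" "n \<ge> 1"
  shows "ereal (\<tau> n) * (Lag g Phi (fconj f) (x n) ys - Lag g Phi (fconj f) xs (y n))
         \<le> ereal ((x (n + 1) - z (n + 1)) \<bullet> (xs - x (n + 1))
              + 1 / \<beta> * ((y n - y (n - 1)) \<bullet> (ys - y n))
              + \<psi> * \<delta> n * ((x n - z (n + 1)) \<bullet> (x (n + 1) - x n))
              + \<tau> n * ((Gx (x n) (y n) - Gx (x (n - 1)) (y (n - 1))) \<bullet> (x n - x (n + 1)))
              + \<tau> n * (Phi (x n) (y (n - 1)) + Gy (x n) (y (n - 1)) \<bullet> (y n - y (n - 1)) - Phi (x n) (y n)))"
proof -
  let ?G = "\<lambda>u. real_of_ereal (g u)" and ?F = "\<lambda>w. real_of_ereal (fconj f w)"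
  have "ereal (\<tau> n) * (Lag g Phi (fconj f) (x n) ys - Lag g Phi (fconj f) xs (y n))
      = ereal (\<tau> n * (?G (x n) + Phi (x n) ys - ?F ys - (?G xs + Phi xs (y n) - ?F (y n))))"
    using assms by (simp add: Lag_real x_in_edom y_in_edom)
  moreover have "\<tau> n * (?G (x n) + Phi (x n) ys - ?F ys - (?G xs + Phi xs (y n) - ?F (y n)))
         \<le> (x (n + 1) - z (n + 1)) \<bullet> (xs - x (n + 1))
              + 1 / \<beta> * ((y n - y (n - 1)) \<bullet> (ys - y n))
              + \<psi> * \<delta> n * ((x n - z (n + 1)) \<bullet> (x (n + 1) - x n))
              + \<tau> n * ((Gx (x n) (y n) - Gx (x (n - 1)) (y (n - 1))) \<bullet> (x n - x (n + 1)))
              + \<tau> n * (Phi (x n) (y (n - 1)) + Gy (x n) (y (n - 1)) \<bullet> (y n - y (n - 1)) - Phi (x n) (y n))"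
    using primal_estimate[OF assms(3,1)] dual_estimate[OF assms(3,2)]
    unfolding distrib_left right_diff_distrib by linarith
  ultimately show ?thesis by simp
qed

end

theorem lemma3p1:
  fixes g :: "'a::euclidean_space \<Rightarrow> ereal"
    and f :: "'b::euclidean_space \<Rightarrow> ereal"
    and Phi :: "'a \<Rightarrow> 'b \<Rightarrow> real"
    and Gx :: "'a \<Rightarrow> 'b \<Rightarrow> 'a"
    and Gy :: "'a \<Rightarrow> 'b \<Rightarrow> 'b"
    and \<psi> \<xi> \<phi> \<omega> \<tau>max \<nu> \<mu> \<eta> \<beta> :: real
    and M :: nat
    and x z :: "nat \<Rightarrow> 'a" and y :: "nat \<Rightarrow> 'b"
    and \<tau> \<delta> :: "nat \<Rightarrow> real"
    and xs :: 'a and ys :: 'b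
    and n :: nat
  assumes f_pcc: "proper_fun f" "convex_fun f" "closed_fun f"
    and g_pcc: "proper_fun g" "convex_fun g" "closed_fun g"
    and Phi_cont: "continuous_on (edom g \<times> edom (fconj f)) (\<lambda>(u, v). Phi u v)"
    (* (A2) *)
    and Phi_convex: "\<And>v. v \<in> edom (fconj f) \<Longrightarrow> convex_on (edom g) (\<lambda>u. Phi u v)"
    and Phi_dx: "\<And>u v. u \<in> edom g \<Longrightarrow> v \<in> edom (fconj f) \<Longrightarrow>
                   ((\<lambda>u'. Phi u' v) has_derivative (\<lambda>h. Gx u v \<bullet> h)) (at u within edom g)"
    and Phi_concave: "\<And>u. u \<in> edom g \<Longrightarrow> concave_on (edom (fconj f)) (\<lambda>v. Phi u v)"
    and Phi_dy: "\<And>u v. u \<in> edom g \<Longrightarrow> v \<in> edom (fconj f) \<Longrightarrow>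
                   ((\<lambda>v'. Phi u v') has_derivative (\<lambda>h. Gy u v \<bullet> h)) (at v within edom (fconj f))"
    and Phi_lip: "\<And>X Y. bounded X \<Longrightarrow> bounded Y \<Longrightarrow>
         \<exists>Lyy Lxx Lxy. Lyy \<ge> 0 \<and> Lxx \<ge> 0 \<and> Lxy > 0 \<and>
           (\<forall>u\<in>X \<inter> edom g. \<forall>u'\<in>X \<inter> edom g. \<forall>v\<in>Y \<inter> edom (fconj f). \<forall>v'\<in>Y \<inter> edom (fconj f).
              norm (Gy u v - Gy u v') \<le> Lyy * norm (v - v') \<and>
              norm (Gx u v - Gx u' v') \<le> Lxx * norm (u - u') + Lxy * norm (v - v'))"
    (* (A1) and the fixed saddle point (xs, ys) \<in> Omega *)
    and xs_dom: "xs \<in> edom g" and ys_dom: "ys \<in> edom (fconj f)"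
    and xs_opt: "- Gx xs ys \<in> subdiff g xs"
    and ys_opt: "Gy xs ys \<in> subdiff (fconj f) ys"
    and L_fin: "\<bar>Lag g Phi (fconj f) xs ys\<bar> \<noteq> \<infinity>"
    (* parameters of PDAc-L *)
    and psi: "1 < \<psi>" "\<psi> < 1 + sqrt 3"
    and xi: "\<xi> > 0" and phi: "\<phi> > 1"
    and omega: "\<omega> = 2 * \<psi> - \<xi> - \<psi>^3 * \<phi> / (1 + \<psi>)" "\<omega> > 0"
    and taumax: "\<tau>max > 0"
    and nu: "0 < \<nu>" "\<nu> < 1" and mu: "0 < \<mu>" "\<mu> < 1"
    and eta: "0 \<le> \<eta>" "\<eta> < 1"
    and M: "M \<ge> 1" and beta: "\<beta> > 0"
    (* initialisation *)
    and x0: "x 0 \<in> edom g" and y0: "y 0 \<in> edom (fconj f)"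
    and tau0: "0 < \<tau> 0" "\<tau> 0 \<le> \<tau>max"
    and z0: "z 0 = x 0" and delta0: "\<delta> 0 = 1"
    (* iteration k \<ge> 1 *)
    and step_z: "\<And>k. k \<ge> 1 \<Longrightarrow> z k = ((\<psi> - 1) / \<psi>) *\<^sub>R x (k - 1) + (1 / \<psi>) *\<^sub>R z (k - 1)"
    and step_x: "\<And>k. k \<ge> 1 \<Longrightarrow>
        x k \<in> Prox (\<tau> (k - 1)) g (z k - \<tau> (k - 1) *\<^sub>R Gx (x (k - 1)) (y (k - 1)))"
    and step_y: "\<And>k. k \<ge> 1 \<Longrightarrow> \<exists>i::nat.
        \<tau> k = min (\<phi> * \<tau> (k - 1)) \<tau>max * \<mu> ^ i \<and>
        y k \<in> Prox (\<beta> * \<tau> k) (fconj f) (y (k - 1) + (\<beta> * \<tau> k) *\<^sub>R Gy (x k) (y (k - 1))) \<and>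
        ls_ok Phi Gx Gy \<xi> \<omega> \<beta> \<nu> \<eta> M x y \<tau> \<delta> k (\<tau> k) (y k) \<and>
        (\<forall>j<i. \<forall>y'. y' \<in> Prox (\<beta> * (min (\<phi> * \<tau> (k - 1)) \<tau>max * \<mu> ^ j)) (fconj f)
                         (y (k - 1) + (\<beta> * (min (\<phi> * \<tau> (k - 1)) \<tau>max * \<mu> ^ j)) *\<^sub>R Gy (x k) (y (k - 1)))
              \<longrightarrow> \<not> ls_ok Phi Gx Gy \<xi> \<omega> \<beta> \<nu> \<eta> M x y \<tau> \<delta> k
                       (min (\<phi> * \<tau> (k - 1)) \<tau>max * \<mu> ^ j) y')"
    and step_delta: "\<And>k. k \<ge> 1 \<Longrightarrow> \<delta> k = \<tau> k / \<tau> (k - 1)"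
    and n: "n \<ge> 1"
  shows "ereal (\<tau> n) * (Lag g Phi (fconj f) (x n) ys - Lag g Phi (fconj f) xs (y n))
         \<le> ereal ((x (n + 1) - z (n + 1)) \<bullet> (xs - x (n + 1))
              + 1 / \<beta> * ((y n - y (n - 1)) \<bullet> (ys - y n))
              + \<psi> * \<delta> n * ((x n - z (n + 1)) \<bullet> (x (n + 1) - x n))
              + \<tau> n * ((Gx (x n) (y n) - Gx (x (n - 1)) (y (n - 1))) \<bullet> (x n - x (n + 1)))
              + \<tau> n * (Phi (x n) (y (n - 1)) + Gy (x n) (y (n - 1)) \<bullet> (y n - y (n - 1)) - Phi (x n) (y n)))"
proof -
  have tau_pos: "\<tau> k > 0" for k
  proof (rule backtracking_steps_pos)
    show "\<exists>i::nat. \<tau> k = min (\<phi> * \<tau> (k - 1)) \<tau>max * \<mu> ^ i" if "k \<ge> 1" for k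
      using step_y[OF that] by blast
  qed (use tau0 phi taumax mu in auto)
  have y_prox: "y k \<in> Prox (\<beta> * \<tau> k) (fconj f) (y (k - 1) + (\<beta> * \<tau> k) *\<^sub>R Gy (x k) (y (k - 1)))"
    if "k \<ge> 1" for k
    using step_y[OF that] by blast
  interpret pdac_iteration g f Phi Gx Gy \<psi> \<beta> x z y \<tau> \<delta>
    using g_pcc f_pcc Phi_convex Phi_dx Phi_concave Phi_dy psi beta tau_pos y0
      step_z step_x y_prox step_delta
    by unfold_locales auto
  show ?thesis by (rule gap_estimate[OF xs_dom ys_dom n])
qed

end
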